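(* Let $\mathcal{X}$ and $\mathcal{Y}$ be finite sets, let $\mathcal{M}\subseteq\mathcal{X}\times\mathcal{Y}$ be a nonempty set (the actual matches), and let $\hat{\mathcal{M}}_H\subseteq\mathcal{X}\times\mathcal{Y}$ be a fixed nonempty set (the matches identified by a holdout batch algorithm, chosen independently of the validation samples). Let $\mathcal{S}_{\mathcal{M}}$ be a sample drawn uniformly at random without replacement from $\mathcal{M}$, and let $\mathcal{S}_{\mathcal{X}}$ be a sample drawn uniformly at random without replacement from $\mathcal{X}$. For $x\in\mathcal{X}$ let $m(x)=|\{y\in\mathcal{Y}:(x,y)\in\mathcal{M}\}|$, and let $k_y$ be an upper bound on $m(x)$ over all $x\in\mathcal{X}$. Define the precision $P_H=|\hat{\mathcal{M}}_H\cap\mathcal{M}|/|\hat{\mathcal{M}}_H|$. Then for any $\delta_r,\delta_p>0$, with probability at least $1-\delta_r-\delta_p$, $$P_H\ \ge\ \frac{|\mathcal{X}|}{|\hat{\mathcal{M}}_H|}\,p^-(\mathcal{M},\mathcal{S}_{\mathcal{M}},\mathbf{1}_{\hat{\mathcal{M}}_H},0,1,\delta_r)\,p^-(\mathcal{X},\mathcal{S}_{\mathcal{X}},m,0,k_y,\delta_p).$$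
   Context: PAC bound rules: $p^+$ and $p^-$ are functions which, given a finite set $\mathcal{P}$ (population), a subset $\mathcal{S}\subseteq\mathcal{P}$, a function $f:\mathcal{P}\to\mathbb{R}$, reals $a\le b$ and $\delta>0$, return a real number, and satisfy the following: for every finite set $\mathcal{P}$ with $|\mathcal{P}|=n$, every sample size $s$, and every $f$ with $a\le f(x)\le b$ for all $x\in\mathcal{P}$, if $\mathcal{S}$ is a size-$s$ sample drawn uniformly at random without replacement from $\mathcal{P}$ and $\mu=\frac1n\sum_{x\in\mathcal{P}}f(x)$, then $\Pr\{\mu>p^+(\mathcal{P},\mathcal{S},f,a,b,\delta)\}\le\delta$ and $\Pr\{\mu<p^-(\mathcal{P},\mathcal{S},f,a,b,\delta)\}\le\delta$. $\mathbf{1}_{A}$ denotes the indicator function of a set $A$. *)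

theory Defs
  imports "HOL-Probability.Probability"
begin

text \<open>All size-s subsets of a population P; sampling uniformly without
  replacement is the uniform distribution on this set.\<close>
definition samples :: "'a set \<Rightarrow> nat \<Rightarrow> 'a set set" where
  "samples P s = {S. S \<subseteq> P \<and> card S = s}"

definition sample_pmf :: "'a set \<Rightarrow> nat \<Rightarrow> 'a set pmf" where
  "sample_pmf P s = pmf_of_set (samples P s)"

definition pop_mean :: "'a set \<Rightarrow> ('a \<Rightarrow> real) \<Rightarrow> real" where
  "pop_mean P f = (\<Sum>x\<in>P. f x) / real (card P)"

definition pac_lower ::
  "('a set \<Rightarrow> 'a set \<Rightarrow> ('a \<Rightarrow> real) \<Rightarrow> real \<Rightarrow> real \<Rightarrow> real \<Rightarrow> real) \<Rightarrow> bool" where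
  "pac_lower p \<longleftrightarrow>
     (\<forall>P s f a b \<delta>. finite P \<and> P \<noteq> {} \<and> s \<le> card P \<and> a \<le> b \<and> \<delta> > 0 \<and>
        (\<forall>x\<in>P. a \<le> f x \<and> f x \<le> b) \<longrightarrow>
        measure_pmf.prob (sample_pmf P s) {S. pop_mean P f < p P S f a b \<delta>} \<le> \<delta>)"

end

theory Submission
  imports Defs
begin

text \<open>The precision factors as
  \<open>P\<^sub>H = |X|/|M\<^sub>H| \<cdot> \<mu>\<^sub>r \<cdot> \<mu>\<^sub>p\<close>, where \<open>\<mu>\<^sub>r = |M\<^sub>H \<inter> M|/|M|\<close> is the population mean of
  \<open>\<one>\<^bsub>M\<^sub>H\<^esub>\<close> over \<open>M\<close> and \<open>\<mu>\<^sub>p = |M|/|X|\<close> is the population mean of \<open>m\<close> over \<open>X\<close>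
  (the fibre sizes of \<open>M\<close> add up to \<open>|M|\<close>). Each PAC lower bound is nonnegative and
  undershoots its mean except with probability \<open>\<delta>\<^sub>r\<close> resp. \<open>\<delta>\<^sub>p\<close>; since the two
  samples are independent, the union bound on the product distribution gives both
  at once with probability at least \<open>1 - \<delta>\<^sub>r - \<delta>\<^sub>p\<close>, and then the product of the
  bounds is at most \<open>\<mu>\<^sub>r \<mu>\<^sub>p\<close>.\<close>

lemma prob_pair_pmf_ge_union_bound:
  fixes D1 :: "'a pmf" and D2 :: "'b pmf"
  assumes "measure_pmf.prob D1 A \<le> d1" "measure_pmf.prob D2 B \<le> d2"
      and "\<And>u v. u \<notin> A \<Longrightarrow> v \<notin> B \<Longrightarrow> (u, v) \<in> G"
  shows "measure_pmf.prob (pair_pmf D1 D2) G \<ge> 1 - d1 - d2"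
proof -
  let ?p = "pair_pmf D1 D2"
  have "measure_pmf.prob ?p (UNIV - G) \<le> measure_pmf.prob ?p (fst -` A \<union> snd -` B)"
    using assms(3) by (intro measure_pmf.finite_measure_mono) fastforce+
  also have "\<dots> \<le> measure_pmf.prob ?p (fst -` A) + measure_pmf.prob ?p (snd -` B)"
    by (intro measure_Un_le) auto
  also have "measure_pmf.prob ?p (fst -` A) = measure_pmf.prob D1 A"
    by (metis measure_map_pmf map_fst_pair_pmf)
  also have "measure_pmf.prob ?p (snd -` B) = measure_pmf.prob D2 B"
    by (metis measure_map_pmf map_snd_pair_pmf)
  finally have "measure_pmf.prob ?p (UNIV - G) \<le> d1 + d2"
    using assms(1,2) by linarith
  moreover have "measure_pmf.prob ?p (UNIV - G) = 1 - measure_pmf.prob ?p G"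
    using measure_pmf.prob_compl[of G ?p] by simp
  ultimately show ?thesis by linarith
qed

lemma pac_lowerD:
  assumes "pac_lower p" "finite P" "P \<noteq> {}" "s \<le> card P" "a \<le> b" "\<delta> > 0"
    and "\<And>x. x \<in> P \<Longrightarrow> a \<le> f x \<and> f x \<le> b"
  shows "measure_pmf.prob (sample_pmf P s) {S. pop_mean P f < p P S f a b \<delta>} \<le> \<delta>"
  using assms unfolding pac_lower_def by blast

lemma pop_mean_indicator:
  assumes "finite P"
  shows "pop_mean P (indicator A) = real (card (A \<inter> P)) / real (card P)"
proof -
  have "(\<Sum>x\<in>P. indicator A x :: real) = real (card (P \<inter> A))"
    using assms by (simp add: indicator_def sum.If_cases)
  then show ?thesis unfolding pop_mean_def by (simp add: Int_commute)
qed

lemma sum_card_fibres: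
  assumes "finite X" "finite Y" "M \<subseteq> X \<times> Y"
  shows "(\<Sum>x\<in>X. card {y\<in>Y. (x, y) \<in> M}) = card M"
proof -
  have "(\<Sum>x\<in>X. card {y\<in>Y. (x, y) \<in> M}) = card (\<Union>x\<in>X. Pair x ` {y\<in>Y. (x, y) \<in> M})"
    using assms(1,2) by (subst card_UN_disjoint) (auto simp: card_image inj_on_def)
  also have "(\<Union>x\<in>X. Pair x ` {y\<in>Y. (x, y) \<in> M}) = M"
    using assms(3) by auto
  finally show ?thesis .
qed

lemma pop_mean_card_fibres:
  assumes "finite X" "finite Y" "M \<subseteq> X \<times> Y"
  shows "pop_mean X (\<lambda>x. real (card {y\<in>Y. (x, y) \<in> M})) = real (card M) / real (card X)"
  unfolding pop_mean_def of_nat_sum[symmetric] sum_card_fibres[OF assms] ..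

lemma precision_factorization:
  assumes "finite X" "finite Y" "M \<subseteq> X \<times> Y" "M \<noteq> {}"
  shows "real (card (MH \<inter> M)) / real (card MH) =
           real (card X) / real (card MH) * pop_mean M (indicator MH)
             * pop_mean X (\<lambda>x. real (card {y\<in>Y. (x, y) \<in> M}))"
proof -
  have "finite M" using assms(1-3) finite_subset by blast
  then have "card M > 0" "card X > 0"
    using assms(1,3,4) by (auto simp: card_gt_0_iff)
  then show ?thesis
    using \<open>finite M\<close> by (simp add: pop_mean_indicator pop_mean_card_fibres[OF assms(1-3)])
qed

theorem theorem1:
  fixes X :: "'x set" and Y :: "'y set"
    and M MH :: "('x \<times> 'y) set"
    and pM :: "('x \<times> 'y) set \<Rightarrow> ('x \<times> 'y) set \<Rightarrow> (('x \<times> 'y) \<Rightarrow> real) \<Rightarrow> real \<Rightarrow> real \<Rightarrow> real \<Rightarrow> real"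
    and pX :: "'x set \<Rightarrow> 'x set \<Rightarrow> ('x \<Rightarrow> real) \<Rightarrow> real \<Rightarrow> real \<Rightarrow> real \<Rightarrow> real"
    and m :: "'x \<Rightarrow> real"
    and sM sX :: nat and ky \<delta>r \<delta>p :: real
  assumes "finite X" "finite Y"
    and "M \<subseteq> X \<times> Y" "M \<noteq> {}"
    and "MH \<subseteq> X \<times> Y" "MH \<noteq> {}"
    and "sM \<le> card M" "sX \<le> card X"
    and "pac_lower pM" "pac_lower pX"
    and "\<forall>P S f a b \<delta>. a \<le> pM P S f a b \<delta>"
    and "\<forall>P S f a b \<delta>. a \<le> pX P S f a b \<delta>"
    and "\<And>x. m x = real (card {y\<in>Y. (x, y) \<in> M})"
    and "\<forall>x\<in>X. m x \<le> ky"
    and "\<delta>r > 0" "\<delta>p > 0"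
  shows "measure_pmf.prob (pair_pmf (sample_pmf M sM) (sample_pmf X sX))
           {(SM, SX). real (card (MH \<inter> M)) / real (card MH) \<ge>
              real (card X) / real (card MH) * pM M SM (indicator MH) 0 1 \<delta>r
                * pX X SX m 0 ky \<delta>p}
         \<ge> 1 - \<delta>r - \<delta>p"
proof -
  have "finite M" using assms(1-3) finite_subset by blast
  have "X \<noteq> {}" using assms(3,4) by auto
  have m_nonneg: "m x \<ge> 0" for x using assms(13) by simp
  with \<open>X \<noteq> {}\<close> assms(14) have "ky \<ge> 0" by (meson ex_in_conv order_trans)
  let ?\<mu>r = "pop_mean M (indicator MH)" and ?\<mu>p = "pop_mean X m"
  have \<mu>r_nonneg: "?\<mu>r \<ge> 0"
    using \<open>finite M\<close> by (simp add: pop_mean_indicator)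
  have "m = (\<lambda>x. real (card {y\<in>Y. (x, y) \<in> M}))" using assms(13) by blast
  then have precision: "real (card (MH \<inter> M)) / real (card MH) = real (card X) / real (card MH) * ?\<mu>r * ?\<mu>p"
    using precision_factorization[OF assms(1-4)] by simp
  show ?thesis
  proof (rule prob_pair_pmf_ge_union_bound)
    show "measure_pmf.prob (sample_pmf M sM) {S. ?\<mu>r < pM M S (indicator MH) 0 1 \<delta>r} \<le> \<delta>r"
      using \<open>finite M\<close> assms(4,7,9,15) by (intro pac_lowerD) (auto simp: indicator_def)
    show "measure_pmf.prob (sample_pmf X sX) {S. ?\<mu>p < pX X S m 0 ky \<delta>p} \<le> \<delta>p"
      using \<open>X \<noteq> {}\<close> \<open>ky \<ge> 0\<close> m_nonneg assms(1,8,10,14,16) by (intro pac_lowerD) auto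
  next
    fix SM SX
    assume "SM \<notin> {S. ?\<mu>r < pM M S (indicator MH) 0 1 \<delta>r}" "SX \<notin> {S. ?\<mu>p < pX X S m 0 ky \<delta>p}"
    with assms(11,12) \<mu>r_nonneg
    have "pM M SM (indicator MH) 0 1 \<delta>r * pX X SX m 0 ky \<delta>p \<le> ?\<mu>r * ?\<mu>p"
      by (intro mult_mono) auto
    then show "(SM, SX) \<in> {(SM, SX). real (card (MH \<inter> M)) / real (card MH) \<ge>
              real (card X) / real (card MH) * pM M SM (indicator MH) 0 1 \<delta>r
                * pX X SX m 0 ky \<delta>p}"
      unfolding precision by (simp add: mult.assoc divide_right_mono mult_left_mono)
  qed
qed

end
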